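(* Suppose there exists a Whitney-maximum graph in $\mathcal{C}_{n,m}$. Then every uniformly most reliable graph in $\mathcal{C}_{n,m}$ is a $0$-element in $\mathcal{C}_{n,m}$.
   Context: $\mathcal{C}_{n,m}$ denotes the set of all connected simple graphs on $n$ vertices and $m$ edges. For a graph $G$ with vertex set $V$, $\kappa(G)$ is its number of connected components, $r(G)=|V|-\kappa(G)$, $c(G)=|E(G)|-|V|+\kappa(G)$. $\mathcal{S}(G)$ is the set of all spanning subgraphs of $G$. The Whitney polynomial is $W_G(x,y)=\sum_{H\in\mathcal{S}(G)}x^{r(G)-r(H)}y^{c(H)}$. A bivariate polynomial is nonnegative if all its coefficients are nonnegative real numbers. $G\in\mathcal{C}_{n,m}$ is Whitney-maximum if for every $H\in\mathcal{C}_{n,m}$ there is a nonnegative polynomial $Q_H$ with $W_G(x,y)-W_H(x,y)=(1-xy)Q_H(x,y)$. $N_i^{(1)}(G)$ is the number of connected spanning subgraphs of $G$ with exactly $i$ edges, and $R_G^{(1)}(p)=\sum_{i=0}^m N_i^{(1)}(G)p^i(1-p)^{m-i}$. A graph $G\in\mathcal{C}_{n,m}$ is uniformly most reliable if $R_G^{(1)}(p)\ge R_H^{(1)}(p)$ for all $H\in\mathcal{C}_{n,m}$ and $p\in[0,1]$. $G\in\mathcal{C}_{n,m}$ is a $0$-element in $\mathcal{C}_{n,m}$ if $N_i^{(1)}(G)\ge N_i^{(1)}(H)$ for all $i\in\{0,\ldots,m\}$ and all $H\in\mathcal{C}_{n,m}$. *)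

theory Defs
  imports Complex_Main "HOL-Computational_Algebra.Polynomial"
begin

definition simple_graph :: "nat \<Rightarrow> nat set set \<Rightarrow> bool" where
  "simple_graph n E \<longleftrightarrow> E \<subseteq> {{u, v} | u v. u < n \<and> v < n \<and> u \<noteq> v}"

definition adj_rel :: "nat set set \<Rightarrow> (nat \<times> nat) set" where
  "adj_rel E = {(u, v). {u, v} \<in> E}"

definition reach_rel :: "nat \<Rightarrow> nat set set \<Rightarrow> (nat \<times> nat) set" where
  "reach_rel n E = Restr ((adj_rel E)\<^sup>*) {0..<n}"

definition num_comp :: "nat \<Rightarrow> nat set set \<Rightarrow> nat" where
  "num_comp n E = card ({0..<n} // reach_rel n E)"

definition connected_graph :: "nat \<Rightarrow> nat set set \<Rightarrow> bool" where
  "connected_graph n E \<longleftrightarrow> num_comp n E = 1"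

definition Cnm :: "nat \<Rightarrow> nat \<Rightarrow> nat set set set" where
  "Cnm n m = {E. simple_graph n E \<and> connected_graph n E \<and> card E = m}"

text \<open>rank r(G) = |V| - kappa(G), corank c(G) = |E| - |V| + kappa(G)
  (both are nonnegative, so nat arithmetic is exact)\<close>
definition grank :: "nat \<Rightarrow> nat set set \<Rightarrow> nat" where
  "grank n E = n - num_comp n E"

definition gcorank :: "nat \<Rightarrow> nat set set \<Rightarrow> nat" where
  "gcorank n E = card E + num_comp n E - n"

text \<open>Bivariate polynomials in x,y are represented as (real poly) poly:
  the outer variable is x, the inner variable (coefficients) is y.
  x^a y^b is  monom (monom 1 b) a.\<close>
definition whitney :: "nat \<Rightarrow> nat set set \<Rightarrow> real poly poly" where
  "whitney n E = (\<Sum>H\<in>Pow E. monom (monom 1 (gcorank n H)) (grank n E - grank n H))"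

definition one_minus_xy :: "real poly poly" where
  "one_minus_xy = 1 - monom (monom 1 1) 1"

definition nonneg_poly2 :: "real poly poly \<Rightarrow> bool" where
  "nonneg_poly2 Q \<longleftrightarrow> (\<forall>i j. coeff (coeff Q i) j \<ge> 0)"

definition whitney_maximum :: "nat \<Rightarrow> nat \<Rightarrow> nat set set \<Rightarrow> bool" where
  "whitney_maximum n m G \<longleftrightarrow> G \<in> Cnm n m \<and>
     (\<forall>H\<in>Cnm n m. \<exists>Q. nonneg_poly2 Q \<and> whitney n G - whitney n H = one_minus_xy * Q)"

definition Nconn :: "nat \<Rightarrow> nat set set \<Rightarrow> nat \<Rightarrow> nat" where
  "Nconn n E i = card {H. H \<subseteq> E \<and> card H = i \<and> connected_graph n H}"

definition rel1 :: "nat \<Rightarrow> nat set set \<Rightarrow> real \<Rightarrow> real" where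
  "rel1 n E p = (\<Sum>i=0..card E. real (Nconn n E i) * p ^ i * (1 - p) ^ (card E - i))"

definition uniformly_most_reliable :: "nat \<Rightarrow> nat \<Rightarrow> nat set set \<Rightarrow> bool" where
  "uniformly_most_reliable n m G \<longleftrightarrow> G \<in> Cnm n m \<and>
     (\<forall>H\<in>Cnm n m. \<forall>p::real. 0 \<le> p \<and> p \<le> 1 \<longrightarrow> rel1 n G p \<ge> rel1 n H p)"

definition zero_element :: "nat \<Rightarrow> nat \<Rightarrow> nat set set \<Rightarrow> bool" where
  "zero_element n m G \<longleftrightarrow> G \<in> Cnm n m \<and>
     (\<forall>H\<in>Cnm n m. \<forall>i\<in>{0..m}. Nconn n G i \<ge> Nconn n H i)"

end

theory Submission
  imports Defs
begin

text \<open>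
  A spanning subgraph has rank \<open>n - 1\<close> exactly when it is connected, so the \<open>x\<^sup>0\<close> part of
  the Whitney polynomial of a connected graph is \<open>\<Sum>\<^sub>j N\<^sub>j\<^sub>+\<^sub>n\<^sub>-\<^sub>1 y\<^sup>j\<close>; since every connected
  spanning subgraph has at least \<open>n - 1\<close> edges, no \<open>N\<^sub>i\<close> is lost. As \<open>(1 - xy) Q\<close> and \<open>Q\<close>
  have the same \<open>x\<^sup>0\<close> part, a Whitney-maximum graph \<open>W\<close> satisfies \<open>N\<^sub>i(W) \<ge> N\<^sub>i(H)\<close> for all
  \<open>H\<close> and \<open>i\<close>. A uniformly most reliable \<open>G\<close> has \<open>R\<^sub>G(1/2) \<ge> R\<^sub>W(1/2)\<close>, i.e.
  \<open>\<Sum>\<^sub>i N\<^sub>i(G) \<ge> \<Sum>\<^sub>i N\<^sub>i(W)\<close>, which together with the termwise domination forces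
  \<open>N\<^sub>i(G) = N\<^sub>i(W)\<close> for all \<open>i\<close>.
\<close>

lemma rtrancl_insert_sym_edge_cases:
  assumes "sym r" and "(x, y) \<in> (r \<union> {(a, b), (b, a)})\<^sup>*"
  shows "(x, y) \<in> r\<^sup>* \<or> (x, a) \<in> r\<^sup>* \<and> (b, y) \<in> r\<^sup>* \<or> (x, b) \<in> r\<^sup>* \<and> (a, y) \<in> r\<^sup>*"
  using assms(2)
proof (induction rule: rtrancl_induct)
  case (step y z)
  have "(u, v) \<in> r\<^sup>* \<Longrightarrow> (v, u) \<in> r\<^sup>*" for u v
    using assms(1) by (simp add: sym_rtrancl symD)
  with step show ?case by (auto intro: rtrancl_into_rtrancl)
qed simp

lemma sym_adj_rel: "sym (adj_rel E)"
  by (auto simp: sym_def adj_rel_def insert_commute)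

lemma equiv_rtrancl_adj_rel: "equiv UNIV ((adj_rel E)\<^sup>*)"
  by (simp add: equiv_def refl_rtrancl trans_rtrancl sym_rtrancl sym_adj_rel)

lemma adj_rel_insert_subset: "\<exists>a b. adj_rel (insert e E) \<subseteq> adj_rel E \<union> {(a, b), (b, a)}"
proof (cases "\<exists>a b. e = {a, b}")
  case True
  then obtain a b where "e = {a, b}" by blast
  then have "adj_rel (insert e E) \<subseteq> adj_rel E \<union> {(a, b), (b, a)}"
    by (auto simp: adj_rel_def doubleton_eq_iff)
  then show ?thesis by blast
next
  case False
  then have "adj_rel (insert e E) \<subseteq> adj_rel E \<union> {(0, 0), (0, 0)}"
    by (auto simp: adj_rel_def)
  then show ?thesis by blast
qed

lemma card_image_le_merge:
  assumes "finite A"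
    and merge: "\<And>x y. x \<in> A \<Longrightarrow> y \<in> A \<Longrightarrow> g x = g y \<Longrightarrow> f x = f y \<or> {f x, f y} = {p, q}"
  shows "card (f ` A) \<le> card (g ` A) + 1"
proof -
  \<comment> \<open>Away from the value \<open>p\<close>, \<open>f\<close> factors through \<open>g\<close>.\<close>
  define A' where "A' = {x \<in> A. f x \<noteq> p}"
  have fin': "finite A'" using \<open>finite A\<close> by (simp add: A'_def)
  have "f ` A' = (f \<circ> inv_into A' g) ` g ` A'"
  proof -
    have "f (inv_into A' g (g x)) = f x" if "x \<in> A'" for x
      using that merge[of x "inv_into A' g (g x)"] inv_into_into[of "g x" g A'] f_inv_into_f[of "g x" g A']
      by (auto simp: A'_def doubleton_eq_iff)
    then show ?thesis by (force simp: image_iff)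
  qed
  have "card (f ` A) \<le> card (insert p (f ` A'))"
    using fin' by (intro card_mono) (auto simp: A'_def)
  also have "\<dots> \<le> card (f ` A') + 1"
    using fin' by (simp add: card_insert_if)
  also have "\<dots> \<le> card (g ` A') + 1"
    using fin' \<open>f ` A' = _\<close> by (metis card_image_le finite_imageI image_comp add_right_mono)
  also have "\<dots> \<le> card (g ` A) + 1"
    using \<open>finite A\<close> by (simp add: card_mono A'_def image_mono)
  finally show ?thesis .
qed

lemma num_comp_eq_card_classes:
  "num_comp n E = card ((\<lambda>x. (adj_rel E)\<^sup>* `` {x} \<inter> {0..<n}) ` {0..<n})"
  unfolding num_comp_def quotient_def reach_rel_def
  by (intro arg_cong[where f = card]) (auto simp: image_def)

lemma num_comp_insert_le: "num_comp n E \<le> num_comp n (insert e E) + 1"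
proof -
  obtain a b where ab: "adj_rel (insert e E) \<subseteq> adj_rel E \<union> {(a, b), (b, a)}"
    using adj_rel_insert_subset by blast
  define S where "S = (adj_rel E)\<^sup>*"
  define S' where "S' = (adj_rel (insert e E))\<^sup>*"
  define cls where "cls R x = R `` {x} \<inter> {0..<n}" for R :: "(nat \<times> nat) set" and x
  have S_class: "S `` {x} = S `` {y}" if "(x, y) \<in> S" for x y
    using that equiv_class_eq_iff[OF equiv_rtrancl_adj_rel] by (simp add: S_def)
  have merge: "cls S x = cls S y \<or> {cls S x, cls S y} = {cls S a, cls S b}"
    if "x \<in> {0..<n}" "y \<in> {0..<n}" "cls S' x = cls S' y" for x y
  proof -
    have "y \<in> cls S' y"
      using \<open>y \<in> {0..<n}\<close> by (simp add: cls_def S'_def)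
    then have "(x, y) \<in> S'"
      using \<open>cls S' x = cls S' y\<close> unfolding cls_def by blast
    then have "(x, y) \<in> (adj_rel E \<union> {(a, b), (b, a)})\<^sup>*"
      using ab rtrancl_mono unfolding S'_def by blast
    then consider "(x, y) \<in> S" | "(x, a) \<in> S" "(b, y) \<in> S" | "(x, b) \<in> S" "(a, y) \<in> S"
      using rtrancl_insert_sym_edge_cases[OF sym_adj_rel] unfolding S_def by blast
    then show ?thesis
    proof cases
      case 1
      then show ?thesis by (simp add: cls_def S_class)
    next
      case 2
      then show ?thesis by (simp add: cls_def S_class)
    next
      case 3
      then show ?thesis by (simp add: cls_def S_class insert_commute)
    qed
  qed
  show ?thesis
    using card_image_le_merge[where A = "{0..<n}" and g = "cls S'" and f = "cls S", OF _ merge]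
    by (simp add: num_comp_eq_card_classes cls_def S_def S'_def)
qed

lemma card_add_num_comp_ge: "finite E \<Longrightarrow> n \<le> card E + num_comp n E"
proof (induction E rule: finite_induct)
  case empty
  have "num_comp n {} = card ((\<lambda>x. {x}) ` {0..<n})"
    by (simp add: num_comp_eq_card_classes adj_rel_def)
  then show ?case
    by (simp add: card_image)
next
  case (insert e E)
  then show ?case
    using num_comp_insert_le[of n E e] by simp
qed

lemma connected_card_ge: "finite H \<Longrightarrow> connected_graph n H \<Longrightarrow> n \<le> card H + 1"
  using card_add_num_comp_ge[of H n] by (simp add: connected_graph_def)

lemma Nconn_eq_0:
  assumes "finite G" and "i + 1 < n"
  shows "Nconn n G i = 0"
proof -
  have "\<not> connected_graph n H" if "H \<subseteq> G" "card H = i" for H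
  proof
    assume "connected_graph n H"
    with finite_subset[OF that(1) assms(1)] have "n \<le> card H + 1"
      by (rule connected_card_ge)
    with that(2) assms(2) show False
      by simp
  qed
  then have none: "{H. H \<subseteq> G \<and> card H = i \<and> connected_graph n H} = {}"
    by blast
  show ?thesis
    unfolding Nconn_def none by simp
qed

lemma num_comp_pos: "0 < n \<Longrightarrow> 0 < num_comp n E"
  by (simp add: num_comp_eq_card_classes card_gt_0_iff)

lemma num_comp_le: "num_comp n E \<le> n"
  unfolding num_comp_eq_card_classes using card_image_le[of "{0..<n}"] by simp

lemma connected_graph_imp_pos: "connected_graph n E \<Longrightarrow> 0 < n"
  using num_comp_le[of n E] by (simp add: connected_graph_def)

lemma finite_simple_graph: "simple_graph n E \<Longrightarrow> finite E"
proof -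
  assume "simple_graph n E"
  then have "E \<subseteq> Pow {0..<n}"
    by (auto simp: simple_graph_def)
  then show ?thesis
    by (rule finite_subset) simp
qed

lemma coeff_whitney_x0:
  assumes "finite G"
  shows "coeff (coeff (whitney n G) 0) j =
    real (card {H \<in> Pow G. grank n G \<le> grank n H \<and> gcorank n H = j})"
proof -
  have "coeff (coeff (whitney n G) 0) j =
      (\<Sum>H\<in>Pow G. if grank n G \<le> grank n H \<and> gcorank n H = j then 1 else 0)"
    unfolding whitney_def coeff_sum by (intro sum.cong) (auto simp: coeff_monom)
  also have "\<dots> = real (card {H \<in> Pow G. grank n G \<le> grank n H \<and> gcorank n H = j})"
    using assms by (simp add: sum.If_cases Int_def conj_commute)
  finally show ?thesis .
qed

lemma coeff_whitney_x0_connected: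
  assumes "finite G" and "connected_graph n G"
  shows "coeff (coeff (whitney n G) 0) j = real (Nconn n G (j + n - 1))"
proof -
  have "0 < n"
    using assms(2) by (rule connected_graph_imp_pos)
  have "grank n G \<le> grank n H \<and> gcorank n H = j \<longleftrightarrow>
      card H = j + n - 1 \<and> connected_graph n H" if "H \<subseteq> G" for H
  proof -
    have "finite H"
      using that assms(1) by (rule finite_subset)
    have "grank n G \<le> grank n H \<longleftrightarrow> connected_graph n H"
      using assms(2) num_comp_pos[OF \<open>0 < n\<close>, of H] num_comp_le[of n H]
      by (auto simp: grank_def connected_graph_def)
    then show ?thesis
      using connected_card_ge[OF \<open>finite H\<close>] \<open>0 < n\<close> by (auto simp: gcorank_def connected_graph_def)
  qed
  then have "{H \<in> Pow G. grank n G \<le> grank n H \<and> gcorank n H = j} =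
      {H. H \<subseteq> G \<and> card H = j + n - 1 \<and> connected_graph n H}"
    by blast
  then show ?thesis
    using coeff_whitney_x0[OF assms(1)] by (simp add: Nconn_def)
qed

lemma coeff_one_minus_xy_mult_0: "coeff (one_minus_xy * Q) 0 = coeff Q 0"
  by (simp add: coeff_mult_0 one_minus_xy_def coeff_monom)

lemma whitney_maximum_Nconn_ge:
  assumes W: "whitney_maximum n m W" and H: "H \<in> Cnm n m"
  shows "Nconn n H i \<le> Nconn n W i"
proof (cases "i + 1 < n")
  case True
  then show ?thesis
    using Nconn_eq_0[of H i n] finite_simple_graph[of n H] H by (simp add: Cnm_def)
next
  case False
  then obtain j where i: "i = j + n - 1"
    by (metis add_diff_cancel_right' le_add_diff_inverse2 not_less)
  obtain Q where "nonneg_poly2 Q" and Q: "whitney n W - whitney n H = one_minus_xy * Q"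
    using W H by (auto simp: whitney_maximum_def)
  have coeff_Nconn: "coeff (coeff (whitney n G) 0) j = real (Nconn n G i)" if "G \<in> Cnm n m" for G
    using that coeff_whitney_x0_connected[of G n j] finite_simple_graph[of n G] by (simp add: i Cnm_def)
  have "real (Nconn n W i) - real (Nconn n H i) = coeff (coeff Q 0) j"
    using arg_cong[OF Q, of "\<lambda>P. coeff (coeff P 0) j"] W H
    by (simp add: coeff_one_minus_xy_mult_0 coeff_Nconn whitney_maximum_def)
  moreover have "0 \<le> coeff (coeff Q 0) j"
    using \<open>nonneg_poly2 Q\<close> by (simp add: nonneg_poly2_def)
  ultimately show ?thesis
    by simp
qed

lemma rel1_one_half: "rel1 n E (1/2) = (\<Sum>i=0..card E. real (Nconn n E i)) / 2 ^ card E"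
proof -
  have "(1/2::real) ^ i * (1/2) ^ (card E - i) = 1 / 2 ^ card E" if "i \<le> card E" for i
    using that by (metis power_add le_add_diff_inverse power_one_over)
  then show ?thesis
    unfolding rel1_def sum_divide_distrib by (intro sum.cong) (simp_all add: mult.assoc)
qed

theorem mainTheorem8:
  fixes n m :: nat
  assumes "\<exists>W. whitney_maximum n m W"
  shows "\<forall>G. uniformly_most_reliable n m G \<longrightarrow> zero_element n m G"
proof (intro allI impI)
  fix G
  assume umr: "uniformly_most_reliable n m G"
  obtain W where W: "whitney_maximum n m W"
    using assms by blast
  have G: "G \<in> Cnm n m" and "W \<in> Cnm n m"
    using umr W by (simp_all add: uniformly_most_reliable_def whitney_maximum_def)
  then have "rel1 n W (1/2) \<le> rel1 n G (1/2)" and "card G = m" and "card W = m"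
    using umr by (simp_all add: uniformly_most_reliable_def Cnm_def)
  then have "(\<Sum>i=0..m. real (Nconn n W i)) \<le> (\<Sum>i=0..m. real (Nconn n G i))"
    by (simp add: rel1_one_half divide_le_cancel)
  moreover have le: "real (Nconn n G i) \<le> real (Nconn n W i)" for i
    using whitney_maximum_Nconn_ge[OF W G] by simp
  then have "(\<Sum>i=0..m. real (Nconn n G i)) \<le> (\<Sum>i=0..m. real (Nconn n W i))"
    by (rule sum_mono)
  ultimately have sums_eq: "(\<Sum>i=0..m. real (Nconn n G i)) = (\<Sum>i=0..m. real (Nconn n W i))"
    by linarith
  have "Nconn n G i = Nconn n W i" if "i \<in> {0..m}" for i
    using sum_mono_inv[OF sums_eq le that] by simp
  then show "zero_element n m G"
    using G whitney_maximum_Nconn_ge[OF W] by (simp add: zero_element_def)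
qed

end
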